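(* Let $\varepsilon>0$ and let $N\ge1$ be an integer; set $\delta(\varepsilon,N):=\varepsilon^4/(16N^8n^4)$. Let $\Lambda\in\mathbb{R}^{p\times p}$ be a connected discrete-time interconnection, $r\in\mathbb{R}^p$ with $r^T\Lambda=r^T$, $r^T\mathbf 1=1$, and $\Omega$ symmetric positive definite with $(\Lambda-\mathbf 1r^T)^T\Omega(\Lambda-\mathbf 1r^T)-\Omega=-I_p$. Let $\rho(\Lambda):=\sigma_{\max}(\Omega)\max\{1,|\Lambda-I_p|^2\}$ and $V(\mathbf x):=\mathbf x^T(\Omega\otimes I_n)\mathbf x$. Then for every $Q:\mathbb{N}\to\overline{\mathcal Q}_n$ with $\sigma_{\min}\big(\sum_{k=0}^{N-1}Q_k\big)\ge\varepsilon$, the solution of $\mathbf x^+=(I_{np}+(\Lambda-I_p)\otimes Q_k)\mathbf x$ satisfies $$V(\mathbf x(N)-\bar{\mathbf x})\le\Big(1-\frac{\delta(\varepsilon,N)}{\rho(\Lambda)}\Big)V(\mathbf x(0)-\bar{\mathbf x}),$$ where $\bar{\mathbf x}:=(\mathbf 1r^T\otimes I_n)\mathbf x(0)$.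
   Context: $|\cdot|$ Euclidean / induced 2-norm; $\mathbf 1$ all-ones vector; $\otimes$ Kronecker product; $\sigma_{\max},\sigma_{\min}$ largest/smallest singular value; $\overline{\mathcal Q}_n$ symmetric positive semidefinite $n\times n$ matrices $R$ with $|R|\le1$. Discrete-time interconnection: $\lambda_{ij}\ge0$, $\sum_j\lambda_{ij}=1$; graph edge $(n_i,n_j)$ iff $\lambda_{ij}>0$; connected if some node is reachable by a directed path from every other node. *)

theory Defs
  imports "HOL-Analysis.Analysis"
begin

definition kron :: "real^'p^'p \<Rightarrow> real^'n^'n \<Rightarrow> real^('p \<times> 'n)^('p \<times> 'n)" where
  "kron A B = (\<chi> ik. \<chi> jl. A $ fst ik $ fst jl * B $ snd ik $ snd jl)"

definition sigma_max :: "real^'n^'n \<Rightarrow> real" where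
  "sigma_max A = Sup {norm (A *v x) | x. norm x = 1}"

definition sigma_min :: "real^'n^'n \<Rightarrow> real" where
  "sigma_min A = Inf {norm (A *v x) | x. norm x = 1}"

definition mnorm2 :: "real^'n^'n \<Rightarrow> real" where
  "mnorm2 A = onorm (\<lambda>x. A *v x)"

definition symmetric_mat :: "real^'n^'n \<Rightarrow> bool" where
  "symmetric_mat A \<longleftrightarrow> transpose A = A"

definition pos_semidef :: "real^'n^'n \<Rightarrow> bool" where
  "pos_semidef A \<longleftrightarrow> symmetric_mat A \<and> (\<forall>x. 0 \<le> x \<bullet> (A *v x))"

definition pos_def :: "real^'n^'n \<Rightarrow> bool" where
  "pos_def A \<longleftrightarrow> symmetric_mat A \<and> (\<forall>x. x \<noteq> 0 \<longrightarrow> 0 < x \<bullet> (A *v x))"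

definition Qbar :: "(real^'n^'n) set" where
  "Qbar = {R. pos_semidef R \<and> mnorm2 R \<le> 1}"

definition dt_interconnection :: "real^'p^'p \<Rightarrow> bool" where
  "dt_interconnection L \<longleftrightarrow> (\<forall>i j. 0 \<le> L $ i $ j) \<and> (\<forall>i. (\<Sum>j\<in>UNIV. L $ i $ j) = 1)"

definition graph_edges :: "real^'p^'p \<Rightarrow> ('p \<times> 'p) set" where
  "graph_edges L = {(i,j). L $ i $ j > 0}"

definition connected_graph :: "real^'p^'p \<Rightarrow> bool" where
  "connected_graph L \<longleftrightarrow> (\<exists>k. \<forall>i. i \<noteq> k \<longrightarrow> (i,k) \<in> (graph_edges L)\<^sup>+)"

definition ones_rT :: "real^'p \<Rightarrow> real^'p^'p" where
  "ones_rT r = (\<chi> i j. r $ j)"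

end

theory Submission
  imports Defs
begin

text \<open>The error \<open>e\<^sub>k = x(k) - xbar\<close> stays in the kernel of \<open>\<one>r\<^sup>T \<otimes> I\<close>, where \<open>I + (\<Lambda> - I) \<otimes> I\<close> acts as
  \<open>(\<Lambda> - \<one>r\<^sup>T) \<otimes> I\<close>. Combining the Lyapunov equation with \<open>Q\<^sub>k\<^sup>2 \<le> Q\<^sub>k\<close> (as \<open>|Q\<^sub>k| \<le> 1\<close>) shows that each step
  decreases \<open>V\<close> by at least \<open>s\<^sub>k\<^sup>2 = |(I \<otimes> Q\<^sub>k) e\<^sub>k|\<^sup>2\<close>. Persistent excitation gives
  \<open>\<epsilon> |e\<^sub>0| \<le> \<Sum>\<^sub>k |(I \<otimes> Q\<^sub>k) e\<^sub>0|\<close>, and each term differs from \<open>s\<^sub>k\<close> by at most the drift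
  \<open>|e\<^sub>k - e\<^sub>0| \<le> |\<Lambda> - I| \<Sum>\<^sub>j s\<^sub>j\<close>. Hence \<open>\<epsilon>\<^sup>2 |e\<^sub>0|\<^sup>2 \<lesssim> N\<^sup>3 \<Sum>\<^sub>k s\<^sub>k\<^sup>2\<close>, and \<open>V(e\<^sub>0) \<le> \<sigma>\<^sub>m\<^sub>a\<^sub>x(\<Omega>) |e\<^sub>0|\<^sup>2\<close>
  turns the total decrease into the claimed contraction factor.\<close>

lemma kron_vec_nth:
  "(kron A B *v z) $ (i,a) = (\<Sum>j\<in>UNIV. \<Sum>b\<in>UNIV. A$i$j * B$a$b * z$(j,b))"
  unfolding kron_def matrix_vector_mult_def
  by (simp add: sum.cartesian_product split_beta flip: UNIV_Times_UNIV)

lemma kron_matrix_mult: "kron A B ** kron C D = kron (A ** C) (B ** D)"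
  unfolding kron_def matrix_matrix_mult_def
  by (simp add: vec_eq_iff sum.cartesian_product split_beta sum_product mult_ac
      flip: UNIV_Times_UNIV)

lemma transpose_kron: "transpose (kron A B) = kron (transpose A) (transpose B)"
  unfolding kron_def transpose_def by (simp add: vec_eq_iff)

lemma kron_mat_1: "kron (mat 1) (mat 1) = (mat 1 :: real^('p::finite \<times> 'n::finite)^('p \<times> 'n))"
  unfolding kron_def mat_def by (auto simp: vec_eq_iff prod_eq_iff)

lemma kron_zero_left [simp]: "kron 0 B = 0"
  unfolding kron_def by (simp add: vec_eq_iff)

lemma kron_diff_left: "kron (A - B) C = kron A C - kron B C"
  unfolding kron_def by (simp add: vec_eq_iff algebra_simps)

lemma kron_diff_right: "kron A (B - C) = kron A B - kron A C"
  unfolding kron_def by (simp add: vec_eq_iff algebra_simps)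

lemma kron_sum_right: "kron A (\<Sum>k\<in>K. B k) = (\<Sum>k\<in>K. kron A (B k))"
  unfolding kron_def by (simp add: vec_eq_iff sum_distrib_left)

lemma sum_matrix_vector_mult: "(\<Sum>k\<in>K. M k) *v z = (\<Sum>k\<in>K. M k *v (z::real^'n))"
  by (induction K rule: infinite_finite_induct) (simp_all add: matrix_vector_mult_add_rdistrib)

lemma inner_matrix_vector_mult: "x \<bullet> (A *v y) = (transpose A *v x) \<bullet> (y::real^'n)"
  by (simp add: dot_lmul_matrix[symmetric])

lemma inner_matrix_vector_mult_both:
  "(A *v x) \<bullet> (B *v y) = x \<bullet> ((transpose A ** B) *v (y::real^'n))"
  by (metis inner_matrix_vector_mult matrix_vector_mul_assoc transpose_transpose)

lemma inner_symmetric_matrix: "transpose A = A \<Longrightarrow> x \<bullet> (A *v y) = y \<bullet> (A *v (x::real^'n))"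
  by (metis inner_matrix_vector_mult inner_commute)

lemma transpose_diff: "transpose (A - B) = transpose A - (transpose B :: real^'n^'m)"
  by (simp add: transpose_def vec_eq_iff)

text \<open>A vector of the product space \<open>\<real>\<^sup>p \<otimes> \<real>\<^sup>n\<close> is a \<open>p \<times> n\<close> array; its rows are the agents' states
  and \<open>kron (mat 1) B\<close>, \<open>kron A (mat 1)\<close> act on rows and columns respectively.\<close>

definition row_slice :: "real^('p::finite \<times> 'n::finite) \<Rightarrow> 'p \<Rightarrow> real^'n" where
  "row_slice z i = (\<chi> a. z$(i,a))"

definition column_slice :: "real^('p::finite \<times> 'n::finite) \<Rightarrow> 'n \<Rightarrow> real^'p" where
  "column_slice z a = (\<chi> i. z$(i,a))"

lemma row_slice_kron_mat_left: "row_slice (kron (mat 1) B *v z) i = B *v row_slice z i"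
  unfolding row_slice_def
  by (simp add: vec_eq_iff kron_vec_nth)
    (simp add: mat_def matrix_vector_mult_def if_distrib if_distribR sum.If_cases cong del: if_weak_cong)

lemma column_slice_kron_mat_right: "column_slice (kron A (mat 1) *v z) a = A *v column_slice z a"
  unfolding column_slice_def
  by (simp add: vec_eq_iff kron_vec_nth)
    (simp add: mat_def matrix_vector_mult_def if_distrib if_distribR sum.If_cases cong del: if_weak_cong)

lemma inner_product_space: "z \<bullet> w = (\<Sum>i\<in>UNIV. \<Sum>a\<in>UNIV. z$(i,a) * w$(i,a))"
  unfolding inner_vec_def
  by (simp add: sum.cartesian_product split_beta flip: UNIV_Times_UNIV)

lemma norm_power2_row_slices: "(norm z)\<^sup>2 = (\<Sum>i\<in>UNIV. (norm (row_slice z i))\<^sup>2)"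
  by (simp add: power2_norm_eq_inner inner_product_space row_slice_def inner_vec_def)

lemma norm_power2_column_slices: "(norm z)\<^sup>2 = (\<Sum>a\<in>UNIV. (norm (column_slice z a))\<^sup>2)"
  by (simp add: power2_norm_eq_inner inner_product_space column_slice_def inner_vec_def)
    (rule sum.swap)

lemma norm_kron_mat_left_le:
  assumes "\<And>x. norm (B *v x) \<le> c * norm x" "0 \<le> c"
  shows "norm (kron (mat 1) B *v z) \<le> c * norm z"
proof (rule power2_le_imp_le)
  have "(norm (kron (mat 1) B *v z))\<^sup>2 = (\<Sum>i\<in>UNIV. (norm (B *v row_slice z i))\<^sup>2)"
    by (simp add: norm_power2_row_slices row_slice_kron_mat_left)
  also have "\<dots> \<le> (\<Sum>i\<in>UNIV. (c * norm (row_slice z i))\<^sup>2)"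
    by (intro sum_mono power_mono assms) auto
  also have "\<dots> = (c * norm z)\<^sup>2"
    by (simp add: norm_power2_row_slices power_mult_distrib sum_distrib_left)
  finally show "(norm (kron (mat 1) B *v z))\<^sup>2 \<le> (c * norm z)\<^sup>2" .
qed (use assms in auto)

lemma norm_kron_mat_left_ge:
  assumes "\<And>x. c * norm x \<le> norm (B *v x)" "0 \<le> c"
  shows "c * norm z \<le> norm (kron (mat 1) B *v z)"
proof (rule power2_le_imp_le)
  have "(c * norm z)\<^sup>2 = (\<Sum>i\<in>UNIV. (c * norm (row_slice z i))\<^sup>2)"
    by (simp add: norm_power2_row_slices power_mult_distrib sum_distrib_left)
  also have "\<dots> \<le> (\<Sum>i\<in>UNIV. (norm (B *v row_slice z i))\<^sup>2)"
    by (intro sum_mono power_mono assms) (use assms in auto)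
  also have "\<dots> = (norm (kron (mat 1) B *v z))\<^sup>2"
    by (simp add: norm_power2_row_slices row_slice_kron_mat_left)
  finally show "(c * norm z)\<^sup>2 \<le> (norm (kron (mat 1) B *v z))\<^sup>2" .
qed auto

lemma norm_kron_mat_right_le:
  assumes "\<And>x. norm (A *v x) \<le> c * norm x" "0 \<le> c"
  shows "norm (kron A (mat 1) *v z) \<le> c * norm z"
proof (rule power2_le_imp_le)
  have "(norm (kron A (mat 1) *v z))\<^sup>2 = (\<Sum>a\<in>UNIV. (norm (A *v column_slice z a))\<^sup>2)"
    by (simp add: norm_power2_column_slices column_slice_kron_mat_right)
  also have "\<dots> \<le> (\<Sum>a\<in>UNIV. (c * norm (column_slice z a))\<^sup>2)"
    by (intro sum_mono power_mono assms) auto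
  also have "\<dots> = (c * norm z)\<^sup>2"
    by (simp add: norm_power2_column_slices power_mult_distrib sum_distrib_left)
  finally show "(norm (kron A (mat 1) *v z))\<^sup>2 \<le> (c * norm z)\<^sup>2" .
qed (use assms in auto)

lemma kron_quadratic_form:
  "z \<bullet> (kron A B *v z) = (\<Sum>i\<in>UNIV. \<Sum>j\<in>UNIV. A$i$j * (row_slice z i \<bullet> (B *v row_slice z j)))"
proof -
  have "z \<bullet> (kron A B *v z)
      = (\<Sum>i\<in>UNIV. \<Sum>a\<in>UNIV. \<Sum>j\<in>UNIV. \<Sum>b\<in>UNIV. z$(i,a) * (A$i$j * B$a$b * z$(j,b)))"
    by (simp add: inner_product_space kron_vec_nth sum_distrib_left)
  also have "\<dots> = (\<Sum>i\<in>UNIV. \<Sum>j\<in>UNIV. \<Sum>a\<in>UNIV. \<Sum>b\<in>UNIV. z$(i,a) * (A$i$j * B$a$b * z$(j,b)))"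
    by (intro sum.cong refl, rule sum.swap)
  also have "\<dots> = (\<Sum>i\<in>UNIV. \<Sum>j\<in>UNIV. A$i$j * (row_slice z i \<bullet> (B *v row_slice z j)))"
    by (simp add: row_slice_def inner_vec_def matrix_vector_mult_def sum_distrib_left mult_ac)
  finally show ?thesis .
qed

lemma mnorm2_nonneg: "0 \<le> mnorm2 A"
  unfolding mnorm2_def by (rule onorm_pos_le) simp

lemma norm_le_mnorm2: "norm (A *v x) \<le> mnorm2 A * norm x"
  unfolding mnorm2_def by (rule onorm) simp

lemma sigma_min_le_norm:
  assumes "\<epsilon> \<le> sigma_min (S::real^'n^'n)"
  shows "\<epsilon> * norm x \<le> norm (S *v x)"
proof (cases "x = 0")
  case False
  define y where "y = (1 / norm x) *\<^sub>R x"
  have "sigma_min S \<le> norm (S *v y)"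
    unfolding sigma_min_def
    by (rule cInf_lower) (use False in \<open>auto simp: y_def intro!: bdd_belowI[of _ 0]\<close>)
  also have "\<dots> = norm (S *v x) / norm x"
    using False by (simp add: y_def matrix_vector_mult_scaleR)
  finally have "sigma_min S * norm x \<le> norm (S *v x)" using False by (simp add: pos_le_divide_eq)
  then show ?thesis using assms by (meson mult_right_mono norm_ge_zero order_trans)
qed simp

lemma norm_le_sigma_max: "norm ((A::real^'n^'n) *v x) \<le> sigma_max A * norm x"
proof (cases "x = 0")
  case False
  define y where "y = (1 / norm x) *\<^sub>R x"
  have "bdd_above {norm (A *v x) | x. norm x = 1}"
    by (rule bdd_aboveI[of _ "onorm ((*v) A)"]) (auto intro: order_trans[OF onorm] simp: linear_linear)
  then have "norm (A *v y) \<le> sigma_max A"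
    unfolding sigma_max_def by (rule cSup_upper[rotated]) (use False in \<open>auto simp: y_def\<close>)
  moreover have "norm (A *v y) = norm (A *v x) / norm x"
    using False by (simp add: y_def matrix_vector_mult_scaleR)
  ultimately show ?thesis using False by (simp add: pos_divide_le_eq)
qed simp

lemma sigma_max_nonneg: "0 \<le> sigma_max (A :: real^'n^'n)"
  using norm_le_sigma_max[of A "axis undefined 1"] by (simp add: norm_axis_1) (meson norm_ge_zero order_trans)

lemma sigma_max_pos_if_pos_def:
  assumes "pos_def (A :: real^'n^'n)"
  shows "0 < sigma_max A"
proof -
  have "0 < axis undefined (1::real) \<bullet> (A *v axis undefined 1)" using assms by (simp add: pos_def_def)
  then have "0 < norm (A *v axis undefined (1::real))" by auto
  also have "\<dots> \<le> sigma_max A" using norm_le_sigma_max[of A "axis undefined 1"] by simp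
  finally show ?thesis .
qed

lemma kron_quadratic_form_le_sigma_max:
  "z \<bullet> (kron A (mat 1) *v z) \<le> sigma_max A * (norm z)\<^sup>2"
proof -
  have "z \<bullet> (kron A (mat 1) *v z) \<le> norm z * norm (kron A (mat 1) *v z)"
    by (metis Cauchy_Schwarz_ineq2 abs_ge_self order_trans)
  also have "\<dots> \<le> norm z * (sigma_max A * norm z)"
    by (intro mult_left_mono norm_kron_mat_right_le norm_le_sigma_max sigma_max_nonneg) simp
  finally show ?thesis by (simp add: power2_eq_square mult_ac)
qed

lemma quadratic_nonneg_discriminant:
  fixes a b c :: real
  assumes c: "0 \<le> c" and nonneg: "\<And>t. 0 \<le> a + 2*b*t + c*t^2"
  shows "b^2 \<le> a*c"
proof (cases "c = 0")
  case True
  have "b = 0"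
  proof (rule ccontr)
    assume "b \<noteq> 0"
    have "0 \<le> a + 2*b*(-(a+1)/(2*b)) + c*(-(a+1)/(2*b))^2" by (rule nonneg)
    also have "\<dots> = -1" using \<open>b \<noteq> 0\<close> True by (simp add: field_simps)
    finally show False by simp
  qed
  then show ?thesis using True by simp
next
  case False
  then have "c > 0" using c by simp
  have "0 \<le> a + 2*b*(-b/c) + c*(-b/c)^2" by (rule nonneg)
  also have "\<dots> = (a*c - b^2)/c" using \<open>c > 0\<close> by (simp add: field_simps power2_eq_square)
  finally show ?thesis using \<open>c > 0\<close> by (simp add: zero_le_divide_iff)
qed

lemma pos_semidef_symmetric: "pos_semidef B \<Longrightarrow> transpose B = B"
  by (simp add: pos_semidef_def symmetric_mat_def)

lemma pos_semidef_nonneg: "pos_semidef B \<Longrightarrow> 0 \<le> x \<bullet> (B *v x)"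
  by (simp add: pos_semidef_def)

lemma pos_semidef_mat_1: "pos_semidef (mat 1)"
  by (simp add: pos_semidef_def symmetric_mat_def)

lemma pos_def_imp_pos_semidef: "pos_def B \<Longrightarrow> pos_semidef B"
  unfolding pos_def_def pos_semidef_def by (metis inner_zero_left order.refl order_less_imp_le)

lemma pos_semidef_cauchy_schwarz:
  assumes "pos_semidef B"
  shows "(x \<bullet> (B *v y))^2 \<le> (x \<bullet> (B *v x)) * (y \<bullet> (B *v (y::real^'n)))"
proof (rule quadratic_nonneg_discriminant)
  show "0 \<le> y \<bullet> (B *v y)" using assms by (rule pos_semidef_nonneg)
  fix t :: real
  have "0 \<le> (x + t *\<^sub>R y) \<bullet> (B *v (x + t *\<^sub>R y))" using assms by (rule pos_semidef_nonneg)
  also have "\<dots> = x \<bullet> (B *v x) + 2 * (x \<bullet> (B *v y)) * t + (y \<bullet> (B *v y)) * t^2"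
    using inner_symmetric_matrix[OF pos_semidef_symmetric[OF assms], of y x]
    by (simp add: matrix_vector_right_distrib matrix_vector_mult_scaleR inner_add_left
        inner_add_right algebra_simps power2_eq_square)
  finally show "0 \<le> x \<bullet> (B *v x) + 2 * (x \<bullet> (B *v y)) * t + (y \<bullet> (B *v y)) * t^2" .
qed

lemma pos_semidef_diag_nonneg: "pos_semidef B \<Longrightarrow> 0 \<le> B$s$s"
  using pos_semidef_nonneg[of B "axis s 1"]
  by (simp add: matrix_vector_mult_basis inner_axis' column_def)

lemma pos_semidef_offdiag: "pos_semidef B \<Longrightarrow> (B$a$s)^2 \<le> B$a$a * B$s$s"
  using pos_semidef_cauchy_schwarz[of B "axis a 1" "axis s 1"]
  by (simp add: matrix_vector_mult_basis inner_axis' column_def)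

lemma Qbar_norm_le: "Q \<in> Qbar \<Longrightarrow> norm (Q *v x) \<le> norm x"
  using norm_le_mnorm2[of Q x] mult_right_mono[of "mnorm2 Q" 1 "norm x"] by (simp add: Qbar_def)

lemma Qbar_pos_semidef_diff_square:
  assumes "Q \<in> Qbar"
  shows "pos_semidef (Q - Q ** Q)"
proof -
  have psd: "pos_semidef Q" using assms by (simp add: Qbar_def)
  note sym = pos_semidef_symmetric[OF psd]
  have "u \<bullet> u \<le> x \<bullet> (Q *v x)" if u: "u = Q *v x" for x u
  proof -
    have xQu: "x \<bullet> (Q *v u) = u \<bullet> u" using u inner_symmetric_matrix[OF sym, of x "Q *v x"] by simp
    have "u \<bullet> (Q *v u) \<le> norm u * norm (Q *v u)" by (metis abs_ge_self Cauchy_Schwarz_ineq2 order_trans)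
    also have "\<dots> \<le> norm u * norm u" by (intro mult_left_mono Qbar_norm_le assms) simp
    finally have uQu: "u \<bullet> (Q *v u) \<le> u \<bullet> u" by (simp add: dot_square_norm power2_eq_square)
    have "(u \<bullet> u) * (u \<bullet> u) = (x \<bullet> (Q *v u))\<^sup>2" using xQu by (simp add: power2_eq_square)
    also have "\<dots> \<le> (x \<bullet> (Q *v x)) * (u \<bullet> (Q *v u))" by (rule pos_semidef_cauchy_schwarz[OF psd])
    also have "\<dots> \<le> (x \<bullet> (Q *v x)) * (u \<bullet> u)" by (intro mult_left_mono uQu pos_semidef_nonneg[OF psd])
    finally have "(u \<bullet> u) * (u \<bullet> u) \<le> (x \<bullet> (Q *v x)) * (u \<bullet> u)" .
    then show ?thesis using pos_semidef_nonneg[OF psd, of x]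
      by (cases "u = 0") (auto simp: mult_le_cancel_right)
  qed
  then have "0 \<le> x \<bullet> ((Q - Q ** Q) *v x)" for x
    using inner_symmetric_matrix[OF sym, of x "Q *v x"]
    by (simp add: matrix_vector_mult_diff_rdistrib inner_diff_right flip: matrix_vector_mul_assoc)
  moreover have "transpose (Q - Q ** Q) = Q - Q ** Q"
    by (simp add: transpose_diff matrix_transpose_mul sym)
  ultimately show ?thesis by (simp add: pos_semidef_def symmetric_mat_def)
qed

definition outer_product :: "real^'n \<Rightarrow> real^'n^'n" where
  "outer_product v = (\<chi> a b. v$a * v$b)"

lemma outer_product_quadratic_form: "x \<bullet> (outer_product v *v x) = (v \<bullet> x)^2"
  unfolding outer_product_def inner_vec_def matrix_vector_mult_def
  by (simp add: power2_eq_square sum_product sum_distrib_left mult_ac)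

lemma pos_semidef_minus_outer_pivot:
  assumes psd: "pos_semidef B" and pivot: "0 < B$s$s"
  defines "v \<equiv> \<chi> a. B$a$s / sqrt (B$s$s)"
  shows "pos_semidef (B - outer_product v)"
    and "(B - outer_product v)$a$b = B$a$b - B$a$s * B$b$s / B$s$s"
proof -
  note sym = pos_semidef_symmetric[OF psd]
  have entry: "outer_product v $ a $ b = B$a$s * B$b$s / B$s$s" for a b
    using pivot by (simp add: outer_product_def v_def real_sqrt_mult[symmetric] flip: power2_eq_square)
  then show "(B - outer_product v)$a$b = B$a$b - B$a$s * B$b$s / B$s$s" by simp
  have "transpose (B - outer_product v) = B - outer_product v"
    using sym unfolding transpose_def
    by (simp add: vec_eq_iff entry mult.commute)
  moreover have "0 \<le> x \<bullet> ((B - outer_product v) *v x)" for x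
  proof -
    have vx: "v \<bullet> x = (x \<bullet> (B *v axis s 1)) / sqrt (B$s$s)"
      by (simp add: v_def inner_vec_def matrix_vector_mult_basis column_def sum_divide_distrib mult.commute)
    have "(x \<bullet> (B *v axis s 1))^2 \<le> (x \<bullet> (B *v x)) * B$s$s"
      using pos_semidef_cauchy_schwarz[OF psd, of x "axis s 1"]
      by (simp add: matrix_vector_mult_basis inner_axis' column_def)
    then have "(v \<bullet> x)^2 \<le> x \<bullet> (B *v x)"
      using pivot by (simp add: vx power_divide pos_divide_le_eq)
    then show ?thesis
      by (simp add: matrix_vector_mult_diff_rdistrib inner_diff_right outer_product_quadratic_form)
  qed
  ultimately show "pos_semidef (B - outer_product v)" by (simp add: pos_semidef_def symmetric_mat_def)
qed

text \<open>Symmetric Gaussian elimination, one pivot row at a time.\<close>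
lemma pos_semidef_sum_outer_products:
  assumes "finite S"
  shows "pos_semidef B \<Longrightarrow> (\<And>a b. B$a$b \<noteq> 0 \<Longrightarrow> a \<in> S) \<Longrightarrow> \<exists>w. B = (\<Sum>k\<in>S. outer_product (w k))"
  using assms
proof (induction S arbitrary: B rule: finite_induct)
  case empty
  then show ?case by (auto simp: vec_eq_iff)
next
  case (insert s S)
  have sym: "B$a$b = B$b$a" for a b
    using arg_cong[OF pos_semidef_symmetric[OF insert.prems(1)], of "\<lambda>M. M $ b $ a"]
    by (simp add: transpose_def)
  show ?case
  proof (cases "B$s$s = 0")
    case True
    have zero: "B$a$s = 0" for a using pos_semidef_offdiag[OF insert.prems(1), of a s] True by simp
    have "a \<in> S" if "B$a$b \<noteq> 0" for a b
      using that insert.prems(2)[OF that] sym[of s b] zero[of b] by auto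
    then obtain w where "B = (\<Sum>k\<in>S. outer_product (w k))" using insert.IH insert.prems(1) by blast
    moreover have "outer_product 0 = 0" by (simp add: outer_product_def vec_eq_iff)
    moreover have "(\<Sum>k\<in>S. outer_product ((w(s := 0)) k)) = (\<Sum>k\<in>S. outer_product (w k))"
      using insert.hyps by (intro sum.cong) auto
    ultimately have "B = (\<Sum>k\<in>insert s S. outer_product ((w(s := 0)) k))"
      using insert.hyps by simp
    then show ?thesis by blast
  next
    case False
    then have pivot: "0 < B$s$s" using pos_semidef_diag_nonneg[OF insert.prems(1), of s] by simp
    define v where "v = (\<chi> a. B$a$s / sqrt (B$s$s))"
    note reduced = pos_semidef_minus_outer_pivot[OF insert.prems(1) pivot, folded v_def]
    have "a \<in> S" if "(B - outer_product v)$a$b \<noteq> 0" for a b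
    proof (cases "a = s")
      case True
      then show ?thesis using that reduced(2)[of a b] pivot sym[of b s] by simp
    next
      case False
      have "B$a$b \<noteq> 0 \<or> B$a$s \<noteq> 0" using that reduced(2)[of a b] by auto
      then show ?thesis using insert.prems(2) False by blast
    qed
    then obtain w where "B - outer_product v = (\<Sum>k\<in>S. outer_product (w k))"
      using insert.IH reduced(1) by blast
    then have "B = (\<Sum>k\<in>insert s S. outer_product ((w(s := v)) k))"
      using insert.hyps by (auto simp: algebra_simps intro!: sum.cong)
    then show ?thesis by blast
  qed
qed

lemma kron_outer_product_quadratic_form:
  "z \<bullet> (kron A (outer_product w) *v z) = (\<chi> i. w \<bullet> row_slice z i) \<bullet> (A *v (\<chi> i. w \<bullet> row_slice z i))"
proof -
  have "row_slice z i \<bullet> (outer_product w *v row_slice z j) = (w \<bullet> row_slice z i) * (w \<bullet> row_slice z j)"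
    for i j
    unfolding outer_product_def inner_vec_def matrix_vector_mult_def
    by (simp add: sum_product sum_distrib_left mult_ac) (subst sum.swap, simp add: mult_ac)
  then have "z \<bullet> (kron A (outer_product w) *v z)
      = (\<Sum>i\<in>UNIV. \<Sum>j\<in>UNIV. A$i$j * ((w \<bullet> row_slice z i) * (w \<bullet> row_slice z j)))"
    by (simp only: kron_quadratic_form)
  also have "\<dots> = (\<chi> i. w \<bullet> row_slice z i) \<bullet> (A *v (\<chi> i. w \<bullet> row_slice z i))"
    unfolding inner_vec_def[of "\<chi> i. w \<bullet> row_slice z i"] matrix_vector_mult_def
    by (simp add: sum_distrib_left mult_ac)
  finally show ?thesis .
qed

lemma kron_pos_semidef_nonneg:
  fixes A :: "real^'p^'p" and B :: "real^'n^'n"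
  assumes "pos_semidef A" "pos_semidef B"
  shows "0 \<le> z \<bullet> (kron A B *v z)"
proof -
  obtain w where "B = (\<Sum>k\<in>(UNIV :: 'n set). outer_product (w k))"
    using pos_semidef_sum_outer_products[OF finite_class.finite_UNIV assms(2) UNIV_I] by blast
  then have "z \<bullet> (kron A B *v z) = (\<Sum>k\<in>UNIV. z \<bullet> (kron A (outer_product (w k)) *v z))"
    by (simp add: kron_sum_right sum_matrix_vector_mult inner_sum_right)
  also have "\<dots> \<ge> 0"
    using assms(1) by (intro sum_nonneg) (simp add: kron_outer_product_quadratic_form pos_semidef_nonneg)
  finally show ?thesis by simp
qed

lemma ones_rT_mult: "ones_rT r ** M = ones_rT (r v* M)"
  unfolding ones_rT_def matrix_matrix_mult_def vector_matrix_mult_def by (simp add: vec_eq_iff)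

lemma ones_rT_idempotent:
  assumes "r \<bullet> (\<chi> i. 1) = 1"
  shows "ones_rT r ** ones_rT r = ones_rT r"
  using assms unfolding ones_rT_def matrix_matrix_mult_def inner_vec_def
  by (simp add: vec_eq_iff flip: sum_distrib_right)

lemma ones_rT_mult_left_eigen:
  assumes "r v* \<Lambda> = r"
  shows "ones_rT r ** (\<Lambda> - mat 1) = 0"
  using assms by (simp add: ones_rT_mult vector_matrix_mult_diff_rdistrib) (simp add: ones_rT_def vec_eq_iff)

lemma stochastic_mult_ones_rT:
  assumes "dt_interconnection \<Lambda>"
  shows "(\<Lambda> - mat 1) ** ones_rT r = 0"
proof -
  have row_sum: "(\<Sum>k\<in>UNIV. \<Lambda>$i$k * r$j) = r$j" for i j
    using assms by (simp add: dt_interconnection_def flip: sum_distrib_right)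
  have id_sum: "(\<Sum>k\<in>UNIV. mat 1$i$k * r$j) = r$j" for i j
    by (simp add: mat_def if_distrib if_distribR cong del: if_weak_cong)
  show ?thesis
    unfolding ones_rT_def matrix_matrix_mult_def
    by (simp add: vec_eq_iff left_diff_distrib sum_subtractf row_sum id_sum)
qed

lemma consensus_error_dynamics:
  fixes R L :: "real^'p^'p" and Q :: "nat \<Rightarrow> real^'n^'n" and x :: "nat \<Rightarrow> real^('p \<times> 'n)"
  assumes RR: "R ** R = R" and RL: "R ** L = 0" and LR: "L ** R = 0"
    and sol: "\<And>k. x (Suc k) = (mat 1 + kron L (Q k)) *v x k"
  defines "e \<equiv> \<lambda>k. x k - kron R (mat 1) *v x 0"
  shows "e (Suc k) = e k + kron L (Q k) *v e k"
    and "kron R (mat 1) *v e k = 0"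
proof -
  have "kron L (Q k) *v (kron R (mat 1) *v x 0) = 0" for k
    by (simp add: matrix_vector_mul_assoc kron_matrix_mult LR)
  then show step: "e (Suc k) = e k + kron L (Q k) *v e k" for k
    by (simp add: e_def sol matrix_vector_mult_add_rdistrib matrix_vector_mult_diff_distrib)
  show "kron R (mat 1) *v e k = 0"
  proof (induction k)
    case 0
    show ?case by (simp add: e_def matrix_vector_mult_diff_distrib matrix_vector_mul_assoc kron_matrix_mult RR)
  next
    case (Suc k)
    then show ?case
      by (simp add: step matrix_vector_right_distrib matrix_vector_mul_assoc kron_matrix_mult RL)
  qed
qed

lemma kron_lyapunov_polarized:
  assumes "transpose A ** \<Omega> ** A - \<Omega> = - mat 1"
  shows "(kron A (mat 1) *v u) \<bullet> (kron \<Omega> (mat 1) *v (kron A (mat 1) *v v))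
       = u \<bullet> (kron \<Omega> (mat 1) *v v) - u \<bullet> (v :: real^('p::finite \<times> 'n::finite))"
proof -
  have "transpose A ** \<Omega> ** A = \<Omega> - mat 1" using assms by (simp add: algebra_simps)
  then show ?thesis
    by (simp add: inner_matrix_vector_mult_both matrix_vector_mul_assoc transpose_kron kron_matrix_mult
        matrix_mul_assoc kron_diff_left kron_mat_1 matrix_vector_mult_diff_rdistrib inner_diff_right)
qed

lemma lyapunov_step_decrease:
  fixes \<Lambda> \<Omega> R :: "real^'p^'p" and Q :: "real^'n^'n" and e :: "real^('p \<times> 'n)"
  assumes \<Omega>: "pos_semidef \<Omega>" and Q: "Q \<in> Qbar"
    and lyap: "transpose (\<Lambda> - R) ** \<Omega> ** (\<Lambda> - R) - \<Omega> = - mat 1"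
    and cons: "kron R (mat 1) *v e = 0"
  defines "L \<equiv> \<Lambda> - mat 1"
  shows "(e + kron L Q *v e) \<bullet> (kron \<Omega> (mat 1) *v (e + kron L Q *v e))
         \<le> e \<bullet> (kron \<Omega> (mat 1) *v e) - (norm (kron (mat 1) Q *v e))\<^sup>2"
proof -
  have Qsym: "transpose Q = Q" using Q by (simp add: Qbar_def pos_semidef_symmetric)
  define y where "y = kron (mat 1) Q *v e"
  define G where "G = transpose L ** \<Omega> ** L"
  let ?F = "\<lambda>X Y. e \<bullet> (kron X Y *v e)"
  have disagreement: "z + kron L (mat 1) *v z = kron (\<Lambda> - R) (mat 1) *v z"
    if "kron R (mat 1) *v z = 0" for z :: "real^('p \<times> 'n)"
    using that by (simp add: L_def kron_diff_left kron_mat_1 algebra_simps)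
  have "kron R (mat 1) *v y = kron (mat 1) Q *v (kron R (mat 1) *v e)"
    by (simp add: y_def matrix_vector_mul_assoc kron_matrix_mult)
  then have "kron R (mat 1) *v y = 0" using cons by simp
  then have "(e + kron L (mat 1) *v e) \<bullet> (kron \<Omega> (mat 1) *v (y + kron L (mat 1) *v y))
           = e \<bullet> (kron \<Omega> (mat 1) *v y) - e \<bullet> y"
    using cons by (simp add: disagreement kron_lyapunov_polarized[OF lyap])
  then have cross: "?F \<Omega> Q + ?F (\<Omega> ** L) Q + ?F (transpose L ** \<Omega>) Q + ?F G Q = ?F \<Omega> Q - ?F (mat 1) Q"
    by (simp add: y_def inner_add_left inner_add_right matrix_vector_right_distrib matrix_vector_mul_assoc
        inner_matrix_vector_mult_both kron_matrix_mult transpose_kron G_def matrix_mul_assoc)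
  have "(e + kron L Q *v e) \<bullet> (kron \<Omega> (mat 1) *v (e + kron L Q *v e))
      = ?F \<Omega> (mat 1) + ?F (\<Omega> ** L) Q + ?F (transpose L ** \<Omega>) Q + ?F G (Q ** Q)"
    by (simp add: inner_add_left inner_add_right matrix_vector_right_distrib matrix_vector_mul_assoc
        inner_matrix_vector_mult_both kron_matrix_mult transpose_kron G_def matrix_mul_assoc Qsym)
  moreover have "(norm y)\<^sup>2 = ?F (mat 1) (Q ** Q)"
    by (simp add: y_def power2_norm_eq_inner inner_matrix_vector_mult_both kron_matrix_mult transpose_kron Qsym)
  moreover have "pos_semidef G"
  proof -
    have "x \<bullet> (G *v x) = (L *v x) \<bullet> (\<Omega> *v (L *v x))" for x
      by (simp add: G_def inner_matrix_vector_mult_both matrix_vector_mul_assoc matrix_mul_assoc)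
    then show ?thesis
      using \<Omega> unfolding G_def pos_semidef_def symmetric_mat_def
      by (simp add: matrix_transpose_mul matrix_mul_assoc)
  qed
  \<comment> \<open>the quadratic terms are controlled by \<open>Q\<^sup>2 \<le> Q\<close>\<close>
  then have "0 \<le> ?F (mat 1) (Q - Q ** Q)" "0 \<le> ?F G (Q - Q ** Q)"
    by (simp_all add: kron_pos_semidef_nonneg pos_semidef_mat_1 Qbar_pos_semidef_diff_square[OF Q])
  ultimately show ?thesis
    using cross by (simp add: y_def kron_diff_right matrix_vector_mult_diff_rdistrib inner_diff_right)
qed

lemma lyapunov_sum_decrease:
  fixes \<Lambda> \<Omega> R :: "real^'p^'p" and Q :: "nat \<Rightarrow> real^'n^'n" and e :: "nat \<Rightarrow> real^('p \<times> 'n)"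
  assumes \<Omega>: "pos_semidef \<Omega>" and Q: "\<And>k. Q k \<in> Qbar"
    and lyap: "transpose (\<Lambda> - R) ** \<Omega> ** (\<Lambda> - R) - \<Omega> = - mat 1"
    and step: "\<And>k. e (Suc k) = e k + kron (\<Lambda> - mat 1) (Q k) *v e k"
    and cons: "\<And>k. kron R (mat 1) *v e k = 0"
  shows "e n \<bullet> (kron \<Omega> (mat 1) *v e n)
         \<le> e 0 \<bullet> (kron \<Omega> (mat 1) *v e 0) - (\<Sum>k<n. (norm (kron (mat 1) (Q k) *v e k))\<^sup>2)"
proof (induction n)
  case (Suc n)
  then show ?case
    using lyapunov_step_decrease[OF \<Omega> Q lyap cons, of n n] by (simp add: step)
qed simp

lemma trajectory_drift:
  assumes Q: "\<And>k. Q k \<in> Qbar" and step: "\<And>k. e (Suc k) = e k + kron L (Q k) *v e k"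
  shows "norm (e k - e 0) \<le> mnorm2 L * (\<Sum>j<k. norm (kron (mat 1) (Q j) *v e j))"
proof (induction k)
  case (Suc k)
  have "kron L (Q k) *v e k = kron L (mat 1) *v (kron (mat 1) (Q k) *v e k)"
    by (simp add: matrix_vector_mul_assoc kron_matrix_mult)
  then have "norm (kron L (Q k) *v e k) \<le> mnorm2 L * norm (kron (mat 1) (Q k) *v e k)"
    by (simp add: norm_kron_mat_right_le norm_le_mnorm2 mnorm2_nonneg)
  moreover have "e (Suc k) - e 0 = (e k - e 0) + kron L (Q k) *v e k"
    by (simp add: step algebra_simps)
  then have "norm (e (Suc k) - e 0) \<le> norm (e k - e 0) + norm (kron L (Q k) *v e k)"
    by (metis norm_triangle_ineq)
  ultimately show ?case using Suc.IH by (simp add: distrib_left)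
qed simp

lemma excitation_lower_bound:
  assumes Q: "\<And>k. Q k \<in> Qbar" and "0 \<le> \<epsilon>" and exc: "\<epsilon> \<le> sigma_min (\<Sum>k<N. Q k)"
    and step: "\<And>k. e (Suc k) = e k + kron L (Q k) *v e k"
  shows "\<epsilon> * norm (e 0) \<le> (1 + real N * mnorm2 L) * (\<Sum>k<N. norm (kron (mat 1) (Q k) *v e k))"
proof -
  define s where "s k = norm (kron (mat 1) (Q k) *v e k)" for k
  define T where "T = (\<Sum>k<N. s k)"
  have close: "norm (kron (mat 1) (Q k) *v e 0) \<le> s k + mnorm2 L * T" if "k < N" for k
  proof -
    have "kron (mat 1) (Q k) *v e 0 = kron (mat 1) (Q k) *v e k - kron (mat 1) (Q k) *v (e k - e 0)"
      by (simp add: matrix_vector_mult_diff_distrib)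
    then have "norm (kron (mat 1) (Q k) *v e 0) \<le> s k + norm (kron (mat 1) (Q k) *v (e k - e 0))"
      unfolding s_def by (metis norm_triangle_ineq4)
    also have "norm (kron (mat 1) (Q k) *v (e k - e 0)) \<le> norm (e k - e 0)"
      using norm_kron_mat_left_le[of "Q k" 1] Qbar_norm_le[OF Q] by simp
    also have "\<dots> \<le> mnorm2 L * (\<Sum>j<k. s j)"
      unfolding s_def by (rule trajectory_drift[of Q e L, OF Q step])
    also have "\<dots> \<le> mnorm2 L * T"
      unfolding T_def using that by (intro mult_left_mono sum_mono2 mnorm2_nonneg) (auto simp: s_def)
    finally show ?thesis by simp
  qed
  have "\<epsilon> * norm (e 0) \<le> norm (kron (mat 1) (\<Sum>k<N. Q k) *v e 0)"
    using \<open>0 \<le> \<epsilon>\<close> by (intro norm_kron_mat_left_ge sigma_min_le_norm exc)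
  also have "\<dots> \<le> (\<Sum>k<N. norm (kron (mat 1) (Q k) *v e 0))"
    by (simp add: kron_sum_right sum_matrix_vector_mult norm_sum)
  also have "\<dots> \<le> (\<Sum>k<N. s k + mnorm2 L * T)" by (intro sum_mono close) simp
  also have "\<dots> = (1 + real N * mnorm2 L) * T" by (simp add: sum.distrib T_def algebra_simps)
  finally show ?thesis by (simp add: T_def s_def)
qed

lemma excitation_le_horizon:
  assumes Q: "\<And>k. Q k \<in> Qbar" and exc: "\<epsilon> \<le> sigma_min (\<Sum>k<N. Q k :: real^'n^'n)"
  shows "\<epsilon> \<le> real N"
proof -
  define u :: "real^'n" where "u = axis undefined 1"
  have "\<epsilon> * norm u \<le> norm ((\<Sum>k<N. Q k) *v u)"
    by (rule sigma_min_le_norm[OF exc])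
  also have "\<dots> \<le> (\<Sum>k<N. norm (Q k *v u))"
    by (simp add: sum_matrix_vector_mult norm_sum)
  also have "\<dots> \<le> (\<Sum>k<N. norm u)" by (intro sum_mono Qbar_norm_le Q)
  finally show ?thesis by (simp add: u_def norm_axis_1)
qed

lemma square_one_plus_mult_le:
  fixes N l :: real
  assumes "1 \<le> N"
  shows "(1 + N * l)\<^sup>2 \<le> 4 * N\<^sup>2 * max 1 (l\<^sup>2)"
proof -
  define m where "m = max 1 (l\<^sup>2)"
  have "1 \<le> m" "l\<^sup>2 \<le> m" by (simp_all add: m_def)
  have "1 \<le> N\<^sup>2" using assms by (simp add: one_le_power)
  have "(1 + N * l)\<^sup>2 \<le> 2 * (1 + N\<^sup>2 * l\<^sup>2)"
    using zero_le_power2[of "1 - N * l"] by (simp add: power2_diff power2_sum power_mult_distrib)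
  also have "\<dots> \<le> 2 * (N\<^sup>2 * m + N\<^sup>2 * m)"
    using mult_mono[of 1 "N\<^sup>2" 1 m] mult_left_mono[of "l\<^sup>2" m "N\<^sup>2"] \<open>1 \<le> N\<^sup>2\<close> \<open>1 \<le> m\<close> \<open>l\<^sup>2 \<le> m\<close>
    by (simp add: algebra_simps)
  finally show ?thesis by (simp add: m_def mult_ac)
qed

lemma square_mult_cube_le:
  fixes \<epsilon> N n :: real
  assumes "0 < \<epsilon>" "\<epsilon> \<le> N" "1 \<le> N" "1 \<le> n"
  shows "\<epsilon>\<^sup>2 * (4 * N ^ 3) \<le> 16 * N ^ 8 * n ^ 4"
proof -
  have "\<epsilon>\<^sup>2 \<le> N\<^sup>2" using assms(1,2) by (simp add: power_mono)
  also have "\<dots> \<le> N ^ 5" using \<open>1 \<le> N\<close> by (simp add: power_increasing)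
  also have "\<dots> \<le> 4 * N ^ 5 * n ^ 4"
    using mult_left_mono[of 1 "4 * n ^ 4" "N ^ 5"] one_le_power[OF \<open>1 \<le> n\<close>, of 4] \<open>1 \<le> N\<close>
    by simp
  finally have "\<epsilon>\<^sup>2 * (4 * N ^ 3) \<le> (4 * N ^ 5 * n ^ 4) * (4 * N ^ 3)"
    using \<open>1 \<le> N\<close> by (intro mult_right_mono) auto
  then show ?thesis by (simp add: mult_ac flip: power_add)
qed

lemma contraction_rate_arith:
  fixes \<epsilon> N n l \<sigma> E V T S :: real
  assumes "0 < \<epsilon>" "\<epsilon> \<le> N" "1 \<le> N" "1 \<le> n" "0 < \<sigma>" "0 \<le> E"
    and V: "0 \<le> V" "V \<le> \<sigma> * E\<^sup>2"
    and exc: "\<epsilon> * E \<le> (1 + N * l) * T"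
    and T: "T\<^sup>2 \<le> N * S"
  shows "\<epsilon> ^ 4 / (16 * N ^ 8 * n ^ 4) / (\<sigma> * max 1 (l\<^sup>2)) * V \<le> S"
proof -
  define m where "m = max 1 (l\<^sup>2)"
  have "0 < m" "0 < 16 * N ^ 8 * n ^ 4" using \<open>1 \<le> N\<close> \<open>1 \<le> n\<close> by (auto simp: m_def)
  have "0 \<le> S" using T \<open>1 \<le> N\<close> by (smt (verit) zero_le_mult_iff zero_le_power2)
  have "\<epsilon>\<^sup>2 * E\<^sup>2 \<le> (1 + N * l)\<^sup>2 * T\<^sup>2"
    using power_mono[OF exc] \<open>0 < \<epsilon>\<close> \<open>0 \<le> E\<close> by (simp add: power_mult_distrib)
  also have "\<dots> \<le> 4 * N\<^sup>2 * m * (N * S)"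
    using square_one_plus_mult_le[OF \<open>1 \<le> N\<close>, of l] T \<open>0 < m\<close> by (intro mult_mono) (auto simp: m_def)
  finally have "\<epsilon>\<^sup>2 * E\<^sup>2 \<le> 4 * N ^ 3 * m * S" by (simp add: power2_eq_square power3_eq_cube mult_ac)
  then have energy: "\<epsilon>\<^sup>2 * V \<le> \<sigma> * (4 * N ^ 3 * m * S)"
    using V \<open>0 < \<sigma>\<close> by (smt (verit) mult.left_commute mult_left_mono zero_le_power2)
  have "\<epsilon> ^ 4 / (16 * N ^ 8 * n ^ 4) / (\<sigma> * m) * V
      = \<epsilon>\<^sup>2 * (\<epsilon>\<^sup>2 * V) / (16 * N ^ 8 * n ^ 4 * (\<sigma> * m))"
    by (simp add: power4_eq_xxxx power2_eq_square)
  also have "\<dots> \<le> \<epsilon>\<^sup>2 * (\<sigma> * (4 * N ^ 3 * m * S)) / (16 * N ^ 8 * n ^ 4 * (\<sigma> * m))"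
    using energy \<open>0 < \<sigma>\<close> \<open>0 < m\<close> \<open>0 < 16 * N ^ 8 * n ^ 4\<close> by (intro divide_right_mono mult_left_mono) auto
  also have "\<dots> = \<epsilon>\<^sup>2 * (4 * N ^ 3) * S / (16 * N ^ 8 * n ^ 4)"
    using \<open>0 < \<sigma>\<close> \<open>0 < m\<close> by (simp add: field_simps)
  also have "\<dots> \<le> S"
    using square_mult_cube_le[OF assms(1-4)] \<open>0 \<le> S\<close> \<open>0 < 16 * N ^ 8 * n ^ 4\<close>
    by (simp add: pos_divide_le_eq mult_left_mono)
  finally show ?thesis unfolding m_def .
qed

theorem theorem11:
  fixes \<epsilon> :: real and N :: nat
    and \<Lambda> \<Omega> :: "real^'p^'p" and r :: "real^'p"
    and Q :: "nat \<Rightarrow> real^'n^'n"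
    and x :: "nat \<Rightarrow> real^('p \<times> 'n)"
  assumes eps: "\<epsilon> > 0" and N: "N \<ge> 1"
    and inter: "dt_interconnection \<Lambda>" and conn: "connected_graph \<Lambda>"
    and r_left: "r v* \<Lambda> = r" and r_sum: "r \<bullet> (\<chi> i. 1) = 1"
    and Omega_pd: "pos_def \<Omega>"
    and lyap: "transpose (\<Lambda> - ones_rT r) ** \<Omega> ** (\<Lambda> - ones_rT r) - \<Omega> = - mat 1"
    and Q_in: "\<forall>k. Q k \<in> Qbar"
    and Q_exc: "sigma_min (\<Sum>k<N. Q k) \<ge> \<epsilon>"
    and sol: "\<forall>k. x (Suc k) = (mat 1 + kron (\<Lambda> - mat 1) (Q k)) *v x k"
  shows "let n = real CARD('n);
             \<delta> = \<epsilon> ^ 4 / (16 * real N ^ 8 * n ^ 4);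
             \<rho> = sigma_max \<Omega> * max 1 ((mnorm2 (\<Lambda> - mat 1))\<^sup>2);
             V = (\<lambda>z. z \<bullet> (kron \<Omega> (mat 1) *v z));
             xbar = kron (ones_rT r) (mat 1) *v x 0
         in V (x N - xbar) \<le> (1 - \<delta> / \<rho>) * V (x 0 - xbar)"
proof -
  define e where "e k = x k - kron (ones_rT r) (mat 1) *v x 0" for k
  define s where "s k = norm (kron (mat 1) (Q k) *v e k)" for k
  define V where "V z = z \<bullet> (kron \<Omega> (mat 1 :: real^'n^'n) *v z)" for z
  note dynamics = consensus_error_dynamics[where Q = Q and x = x, OF ones_rT_idempotent[OF r_sum]
      ones_rT_mult_left_eigen[OF r_left] stochastic_mult_ones_rT[OF inter] sol[rule_format], folded e_def]
  have \<Omega>: "pos_semidef \<Omega>" using Omega_pd by (rule pos_def_imp_pos_semidef)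
  have decrease: "V (e N) \<le> V (e 0) - (\<Sum>k<N. (s k)\<^sup>2)"
    unfolding V_def s_def using \<Omega> Q_in lyap dynamics by (intro lyapunov_sum_decrease) auto
  have "\<epsilon> * norm (e 0) \<le> (1 + real N * mnorm2 (\<Lambda> - mat 1)) * (\<Sum>k<N. s k)"
    unfolding s_def using Q_in eps Q_exc dynamics(1) by (intro excitation_lower_bound) auto
  moreover have "(\<Sum>k<N. s k)\<^sup>2 \<le> real N * (\<Sum>k<N. (s k)\<^sup>2)"
    using sum_squared_le_sum_of_squares[of s "{..<N}"] by (simp add: mult.commute)
  ultimately have "\<epsilon> ^ 4 / (16 * real N ^ 8 * real CARD('n) ^ 4)
      / (sigma_max \<Omega> * max 1 ((mnorm2 (\<Lambda> - mat 1))\<^sup>2)) * V (e 0) \<le> (\<Sum>k<N. (s k)\<^sup>2)"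
    using eps N excitation_le_horizon[OF _ Q_exc] Q_in sigma_max_pos_if_pos_def[OF Omega_pd]
      kron_quadratic_form_le_sigma_max[of "e 0" \<Omega>] kron_pos_semidef_nonneg[OF \<Omega> pos_semidef_mat_1]
    by (intro contraction_rate_arith) (auto simp: V_def)
  with decrease show ?thesis
    unfolding Let_def e_def[symmetric] V_def[symmetric] by (simp add: left_diff_distrib)
qed

end
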